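(* Assume the reduced model family is $(\varepsilon,\mu)$-admissible for some $\varepsilon>0$, $\mu\ge1$. Let $u\in V$ with $\operatorname{dist}(u,\mathcal M)\le\varepsilon_{model}$ and $w=P_Wu+\eta$, where $\eta\in W$ and $\|\eta\|\le\varepsilon_{noise}$. Let $u^*=u^*(w)$ be the estimator obtained by surrogate model selection with the surrogate $\mathcal S(v,\mathcal M)=\min_{y\in Y}\mathcal R(v,y)$. Define the alternating minimization sequence as follows: - set $u^0=u^*$ and choose $y^0\in\operatorname{argmin}_{y\in Y}\mathcal R(u^*,y)$; - for $k\ge0$, choose $y^{k+1}\in\operatorname{argmin}_{y\in Y}\mathcal R(u^k,y)$; - for $k\ge0$, let $u^{k+1}$ be the minimizer of $v\mapsto\mathcal R(v,y^{k+1})$ over $v\in w+W^\perp$. Then $\mathcal R(u^{k+1},y^{k+1})\le\mathcal R(u^k,y^k)$ for all $k\ge0$. Moreover, for every $k\ge0$, $$\|u-u^k\|\le\delta_{\kappa\rho}+\varepsilon_{noise},\qquad\rho:=\mu(\varepsilon+\varepsilon_{noise})+(\mu+1)\varepsilon_{model},\quad\kappa=R/r.$$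
   Context: Let $V$ and $Z$ be real Hilbert spaces, with $\|\cdot\|$ the norm of $V$ and $Z'$ the dual of $Z$. Let $Y\subset\mathbb R^d$ be compact. For $y\in Y$ let $A(y):V\to Z'$ be a bounded linear isomorphism and $f(y)\in Z'$, with $y\mapsto A(y)$ and $y\mapsto f(y)$ continuous. Assume there are constants $0<r\le R$ such that $\|A(y)\|_{V\to Z'}\le R$ and $\|A(y)^{-1}\|_{Z'\to V}\le r^{-1}$ for all $y\in Y$. Let $u(y)=A(y)^{-1}f(y)$ and $\mathcal M=\{u(y):y\in Y\}$. Define the residual $\mathcal R(v,y)=\|A(y)v-f(y)\|_{Z'}$. Let $W\subset V$ be a subspace of finite dimension $m$, let $P_W$ be the orthogonal projection onto $W$, and let $W^\perp$ be its orthogonal complement. For $w\in W$ put $V_w=w+W^\perp$. For $\sigma\ge0$ define $\mathcal M_\sigma=\{v:\operatorname{dist}(v,\mathcal M)\le\sigma\}$ and $\delta_\sigma=\sup\{\|u-v\|:u,v\in\mathcal M_\sigma,u-v\in W^\perp\}$. For a finite-dimensional subspace $E$ let $\mu(E,W)=\sup_{v\in E\setminus\{0\}}\|v\|/\|P_Wv\|$, with $\mu(\{0\},W)=1$. A reduced model family consists of: - sets $\mathcal M_1,\dots,\mathcal M_K$ with $\mathcal M=\bigcup_k\mathcal M_k$; - affine spaces $V_k=\bar u_k+\bar V_k$ with $\dim\bar V_k\le m$; - numbers $\varepsilon_k\ge\sup_{u\in\mathcal M_k}\operatorname{dist}(u,V_k)$; - constants $\mu_k=\mu(\bar V_k,W)$.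 The family is $(\varepsilon,\mu)$-admissible if $\varepsilon_k\le\varepsilon$ and $\mu_k\le\mu$ for all $k$. PBDW estimators: $u_k^*(w)=\operatorname{argmin}\{\operatorname{dist}(v,V_k):v\in V_w\}$. Surrogate model selection picks $k^*(w)$ as a minimizer of $k\mapsto\mathcal S(u_k^*(w),\mathcal M)$ and sets $u^*(w)=u^*_{k^*(w)}(w)$. *)

theory Defs
  imports "HOL-Analysis.Analysis"
begin

definition fin_dim_subspace :: "'v::real_vector set \<Rightarrow> bool" where
  "fin_dim_subspace E \<longleftrightarrow> subspace E \<and> (\<exists>B. finite B \<and> E = span B)"

definition proj :: "'v::real_inner set \<Rightarrow> 'v \<Rightarrow> 'v" where
  "proj W v = (THE p. p \<in> W \<and> (\<forall>x\<in>W. inner (v - p) x = 0))"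

definition affW :: "'v::real_inner set \<Rightarrow> 'v \<Rightarrow> 'v set" where
  "affW W w = {w + x | x. x \<in> orthogonal_comp W}"

definition mu_const :: "'v::real_inner set \<Rightarrow> 'v set \<Rightarrow> ereal" where
  "mu_const E W = (if E \<subseteq> {0} then 1
     else (SUP v\<in>E - {0}. (if proj W v = 0 then \<infinity> else ereal (norm v / norm (proj W v)))))"

definition resid :: "('a \<Rightarrow> 'v::real_normed_vector \<Rightarrow>\<^sub>L 'z::real_normed_vector) \<Rightarrow> ('a \<Rightarrow> 'z) \<Rightarrow> 'v \<Rightarrow> 'a \<Rightarrow> real" where
  "resid A f v y = norm (A y v - f y)"

definition solman :: "'a set \<Rightarrow> ('a \<Rightarrow> 'v::real_normed_vector \<Rightarrow>\<^sub>L 'z::real_normed_vector) \<Rightarrow> ('a \<Rightarrow> 'z) \<Rightarrow> 'v set" where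
  "solman Y A f = {u. \<exists>y\<in>Y. A y u = f y}"

definition surrogate :: "'a set \<Rightarrow> ('a \<Rightarrow> 'v::real_normed_vector \<Rightarrow>\<^sub>L 'z::real_normed_vector) \<Rightarrow> ('a \<Rightarrow> 'z) \<Rightarrow> 'v \<Rightarrow> real" where
  "surrogate Y A f v = (INF y\<in>Y. resid A f v y)"

definition Msig :: "'v::real_normed_vector set \<Rightarrow> real \<Rightarrow> 'v set" where
  "Msig M \<sigma> = {v. infdist v M \<le> \<sigma>}"

definition delta :: "'v::real_inner set \<Rightarrow> 'v set \<Rightarrow> real \<Rightarrow> real" where
  "delta M W \<sigma> = Sup {norm (u - v) | u v. u \<in> Msig M \<sigma> \<and> v \<in> Msig M \<sigma> \<and> u - v \<in> orthogonal_comp W}"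

end

theory Submission
  imports Defs
begin

text \<open>
  Each sweep of the alternating minimisation lowers the residual first in the parameter and then
  in the state, so the residuals decrease. The initial residual is the surrogate of the selected
  PBDW estimate, hence at most the residual of the estimate \<open>u\<^sub>k\<^sup>*\<close> built from a piece
  \<open>M\<^sub>k\<close> that contains a solution \<open>u(y)\<close> close to \<open>u\<close>. Since \<open>\<parallel>A(y)\<parallel> \<le> R\<close> and the noisy
  PBDW estimate is within \<open>\<mu>(\<epsilon> + \<parallel>P\<^sub>W u(y) - w\<parallel>)\<close> of \<open>u(y)\<close>, all residuals are at most
  \<open>R\<rho>\<close>. The stability bound \<open>dist(v, M) \<le> R(v, y) / r\<close> then puts every iterate into
  \<open>M\<^bsub>\<kappa>\<rho>\<^esub>\<close>, and \<open>u + \<eta>\<close> lies there as well. Both have \<open>W\<close>-component \<open>w\<close>, so they are at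
  distance at most \<open>\<delta>\<^bsub>\<kappa>\<rho>\<^esub>\<close>, and \<open>u\<close> is within the noise level of \<open>u + \<eta>\<close>.
\<close>

section \<open>Orthogonal projection onto finite-dimensional subspaces\<close>

lemma orthogonal_projection_onto_span_exists:
  fixes B :: "'v::real_inner set"
  assumes "finite B"
  shows "\<exists>p\<in>span B. \<forall>x\<in>span B. inner (v - p) x = 0"
  using assms
proof (induction B arbitrary: v rule: finite_induct)
  case empty
  show ?case by auto
next
  case (insert b B)
  obtain pb where pb: "pb \<in> span B" "\<forall>x\<in>span B. inner (b - pb) x = 0"
    using insert.IH by blast
  obtain pv where pv: "pv \<in> span B" "\<forall>x\<in>span B. inner (v - pv) x = 0"
    using insert.IH by blast
  \<comment> \<open>Gram--Schmidt step: \<open>b'\<close> is orthogonal to \<open>span B\<close>, and \<open>p\<close> adds the component of \<open>v\<close> along \<open>b'\<close>.\<close>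
  define b' where "b' = b - pb"
  define p where "p = pv + (inner v b' / inner b' b') *\<^sub>R b'"
  have span_B: "span B \<subseteq> span (insert b B)"
    by (simp add: span_mono subset_insertI)
  have "b' \<in> span (insert b B)"
    unfolding b'_def using pb(1) span_B by (meson insertI1 span_base span_diff subsetD)
  then have p_span: "p \<in> span (insert b B)"
    unfolding p_def using pv(1) span_B by (meson span_add span_scale subsetD)
  have b'_orth: "inner b' y = 0" if "y \<in> span B" for y
    using pb(2) that by (simp add: b'_def)
  have orth_B: "inner (v - p) y = 0" if "y \<in> span B" for y
    using pv(2) b'_orth[OF that] that by (simp add: p_def inner_diff_left inner_add_left)
  have orth_b': "inner (v - p) b' = 0"
  proof (cases "b' = 0")
    case False
    then show ?thesis
      using b'_orth[OF pv(1)] by (simp add: p_def inner_diff_right inner_add_right inner_commute)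
  qed simp
  have "inner (v - p) b = inner (v - p) b' + inner (v - p) pb"
    by (simp add: b'_def inner_diff_right)
  then have orth_b: "inner (v - p) b = 0"
    using orth_b' orth_B[OF pb(1)] by simp
  have "orthogonal (v - p) y" if "y \<in> insert b B" for y
    using that orth_b orth_B span_base unfolding orthogonal_def by blast
  then have "orthogonal (v - p) x" if "x \<in> span (insert b B)" for x
    using that orthogonal_to_span by blast
  then show ?case
    using p_span unfolding orthogonal_def by blast
qed

lemma fin_dim_subspace_subspace: "fin_dim_subspace E \<Longrightarrow> subspace E"
  unfolding fin_dim_subspace_def by blast

lemma proj_unique:
  assumes E: "fin_dim_subspace E" and "p \<in> E" and "\<forall>x\<in>E. inner (v - p) x = 0"
  shows "proj E v = p"
  unfolding proj_def
proof (rule the_equality)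
  show "p \<in> E \<and> (\<forall>x\<in>E. inner (v - p) x = 0)" using assms by blast
  fix q assume q: "q \<in> E \<and> (\<forall>x\<in>E. inner (v - q) x = 0)"
  have "p - q \<in> E"
    using assms(2) q subspace_diff[OF fin_dim_subspace_subspace[OF E]] by blast
  have "inner (p - q) (p - q) = inner (v - q) (p - q) - inner (v - p) (p - q)"
    by (simp add: inner_diff_left)
  then have "inner (p - q) (p - q) = 0"
    using \<open>p - q \<in> E\<close> assms(3) q by simp
  then show "q = p" by simp
qed

lemma
  assumes "fin_dim_subspace E"
  shows proj_in: "proj E v \<in> E"
    and proj_orthogonal: "x \<in> E \<Longrightarrow> inner (v - proj E v) x = 0"
proof -
  obtain B where "finite B" "E = span B"
    using assms unfolding fin_dim_subspace_def by blast
  then obtain p where "p \<in> E" "\<forall>x\<in>E. inner (v - p) x = 0"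
    using orthogonal_projection_onto_span_exists by blast
  with proj_unique[OF assms] show "proj E v \<in> E" "x \<in> E \<Longrightarrow> inner (v - proj E v) x = 0"
    by simp_all
qed

lemma linear_proj:
  assumes E: "fin_dim_subspace E"
  shows "linear (proj E)"
proof (rule linearI)
  note sE = fin_dim_subspace_subspace[OF E]
  fix a b :: 'a and t :: real
  show "proj E (a + b) = proj E a + proj E b"
  proof (rule proj_unique[OF E])
    show "proj E a + proj E b \<in> E"
      using proj_in[OF E] by (simp add: subspace_add[OF sE])
    have "a + b - (proj E a + proj E b) = (a - proj E a) + (b - proj E b)" by simp
    then show "\<forall>x\<in>E. inner (a + b - (proj E a + proj E b)) x = 0"
      using proj_orthogonal[OF E] by (simp only: inner_add_left) simp
  qed
  show "proj E (t *\<^sub>R a) = t *\<^sub>R proj E a"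
  proof (rule proj_unique[OF E])
    show "t *\<^sub>R proj E a \<in> E"
      using proj_in[OF E] by (simp add: subspace_scale[OF sE])
    show "\<forall>x\<in>E. inner (t *\<^sub>R a - t *\<^sub>R proj E a) x = 0"
      using proj_orthogonal[OF E] by (simp flip: scaleR_diff_right)
  qed
qed

lemma proj_self: "fin_dim_subspace E \<Longrightarrow> x \<in> E \<Longrightarrow> proj E x = x"
  by (rule proj_unique) simp_all

lemma minus_proj_in_orthogonal_comp:
  assumes "fin_dim_subspace W"
  shows "v - proj W v \<in> orthogonal_comp W"
  using proj_orthogonal[OF assms, of _ v] by (simp add: orthogonal_comp_def orthogonal_def inner_commute)

lemma norm_proj_Pythagorean:
  assumes "fin_dim_subspace E"
  shows "(norm v)\<^sup>2 = (norm (proj E v))\<^sup>2 + (norm (v - proj E v))\<^sup>2"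
proof -
  have "orthogonal (proj E v) (v - proj E v)"
    using proj_orthogonal[OF assms proj_in[OF assms]] by (simp add: orthogonal_def inner_commute)
  then show ?thesis
    using norm_add_Pythagorean[of "proj E v" "v - proj E v"] by simp
qed

lemma norm_proj_le:
  assumes "fin_dim_subspace E"
  shows "norm (proj E v) \<le> norm v"
proof (rule power2_le_imp_le)
  show "(norm (proj E v))\<^sup>2 \<le> (norm v)\<^sup>2"
    using norm_proj_Pythagorean[OF assms, of v] zero_le_power2[of "norm (v - proj E v)"]
    by linarith
qed simp

lemma proj_affW:
  assumes "fin_dim_subspace W" "w \<in> W" "v \<in> affW W w"
  shows "proj W v = w"
  using assms unfolding affW_def orthogonal_comp_def orthogonal_def
  by (auto intro!: proj_unique simp: inner_commute)

section \<open>Error of the PBDW estimate\<close>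

lemma infdist_affine_subspace:
  assumes E: "fin_dim_subspace E"
  shows "infdist v {c + x |x. x \<in> E} = norm (v - c - proj E (v - c))"
proof (rule antisym)
  let ?d = "v - c - proj E (v - c)"
  have "c + proj E (v - c) \<in> {c + x |x. x \<in> E}"
    using proj_in[OF E] by blast
  then have "infdist v {c + x |x. x \<in> E} \<le> dist v (c + proj E (v - c))"
    by (rule infdist_le)
  then show "infdist v {c + x |x. x \<in> E} \<le> norm ?d"
    by (simp add: dist_norm diff_diff_eq)
  have "norm ?d \<le> dist v z" if z: "z \<in> {c + x |x. x \<in> E}" for z
  proof -
    obtain x where x: "x \<in> E" "z = c + x" using z by blast
    have "proj E (v - c) - x \<in> E"
      using proj_in[OF E] x(1) subspace_diff[OF fin_dim_subspace_subspace[OF E]] by blast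
    then have orth: "orthogonal ?d (proj E (v - c) - x)"
      using proj_orthogonal[OF E] by (simp add: orthogonal_def)
    have split: "v - z = ?d + (proj E (v - c) - x)"
      using x(2) by simp
    have "(norm (v - z))\<^sup>2 = (norm ?d)\<^sup>2 + (norm (proj E (v - c) - x))\<^sup>2"
      unfolding split by (rule norm_add_Pythagorean[OF orth])
    then show ?thesis
      by (simp add: dist_norm power2_le_imp_le)
  qed
  then show "norm ?d \<le> infdist v {c + x |x. x \<in> E}"
    unfolding infdist_eq_setdist
    using subspace_0[OF fin_dim_subspace_subspace[OF E]] by (intro le_setdistI) auto
qed

lemma inner_eq_0_if_norm_minimal:
  fixes a b :: "'v::real_inner"
  assumes min: "\<And>t::real. norm a \<le> norm (a - t *\<^sub>R b)"
  shows "inner a b = 0"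
proof (cases "b = 0")
  case False
  define t where "t = inner a b / inner b b"
  have "(norm (a - t *\<^sub>R b))\<^sup>2 = inner a a - 2 * t * inner a b + t * t * inner b b"
    by (simp add: power2_norm_eq_inner inner_diff_left inner_diff_right inner_commute algebra_simps)
  also have "\<dots> = inner a a - (inner a b)\<^sup>2 / inner b b"
    using False by (simp add: t_def power2_eq_square field_simps)
  finally have "(norm (a - t *\<^sub>R b))\<^sup>2 = (norm a)\<^sup>2 - (inner a b)\<^sup>2 / inner b b"
    by (simp add: power2_norm_eq_inner)
  moreover have "(norm a)\<^sup>2 \<le> (norm (a - t *\<^sub>R b))\<^sup>2"
    using min by (simp add: power_mono)
  ultimately have "(inner a b)\<^sup>2 / inner b b \<le> 0" by simp
  moreover have "0 < inner b b"
    using False by simp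
  ultimately show ?thesis
    by (simp add: divide_le_0_iff)
qed simp

lemma norm_le_mu_const_mult_proj:
  assumes mu: "mu_const E W \<le> ereal \<mu>" and "x \<in> E" and "0 \<le> \<mu>"
  shows "norm x \<le> \<mu> * norm (proj W x)"
proof (cases "x = 0")
  case False
  let ?ratio = "\<lambda>v. if proj W v = 0 then \<infinity> else ereal (norm v / norm (proj W v))"
  have "?ratio x \<le> (SUP v\<in>E - {0}. ?ratio v)"
    using \<open>x \<in> E\<close> False by (intro SUP_upper) simp
  also have "\<dots> = mu_const E W"
    using \<open>x \<in> E\<close> False by (auto simp: mu_const_def)
  finally have "?ratio x \<le> ereal \<mu>"
    using mu by (rule order_trans)
  then have "proj W x \<noteq> 0" "norm x / norm (proj W x) \<le> \<mu>"
    by (auto split: if_splits)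
  then show ?thesis
    by (simp add: divide_le_eq mult.commute)
qed (simp add: \<open>0 \<le> \<mu>\<close>)

lemma affW_memI: "x \<in> orthogonal_comp W \<Longrightarrow> w + x \<in> affW W w"
  unfolding affW_def by blast

lemma pbdw_infdist_le_misfit:
  assumes W: "fin_dim_subspace W"
    and us_min: "\<forall>v\<in>affW W w. infdist us V \<le> infdist v V"
    and "z \<in> V"
  shows "infdist us V \<le> norm (w - proj W z)"
proof -
  have "z + (w - proj W z) = w + (z - proj W z)" by simp
  then have "z + (w - proj W z) \<in> affW W w"
    using affW_memI[OF minus_proj_in_orthogonal_comp[OF W]] by metis
  then have "infdist us V \<le> infdist (z + (w - proj W z)) V"
    using us_min by blast
  also have "\<dots> \<le> dist (z + (w - proj W z)) z"
    using \<open>z \<in> V\<close> by (rule infdist_le)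
  finally show ?thesis
    by (simp add: dist_norm)
qed

text \<open>
  Moving \<open>z\<close> within \<open>c + E\<close> and correcting by the misfit gives competitors in \<open>V\<^sub>w\<close>, so \<open>z\<close>
  minimises the data misfit \<open>\<parallel>w - P\<^sub>W z\<parallel>\<close> over \<open>c + E\<close>; this forces the remaining equalities.
\<close>
lemma pbdw_estimator_decomposition:
  assumes W: "fin_dim_subspace W" and E: "fin_dim_subspace E" and "w \<in> W"
    and us: "us \<in> affW W w"
    and us_min: "\<forall>v\<in>affW W w. infdist us {c + x |x. x \<in> E} \<le> infdist v {c + x |x. x \<in> E}"
  defines "z \<equiv> c + proj E (us - c)"
  shows "us = z + (w - proj W z)"
    and "x \<in> E \<Longrightarrow> inner (w - proj W z) (proj W x) = 0"
proof -
  let ?V = "{c + x |x. x \<in> E}"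
  have z_dist: "infdist us ?V = norm (us - z)"
    using infdist_affine_subspace[OF E, of us c] by (simp only: z_def diff_diff_eq)
  have P_misfit: "proj W (us - z) = w - proj W z"
    using linear_diff[OF linear_proj[OF W]] proj_affW[OF W \<open>w \<in> W\<close> us] by simp
  have "z \<in> ?V"
    using proj_in[OF E] z_def by blast
  then have "norm (us - z) \<le> norm (w - proj W z)"
    using pbdw_infdist_le_misfit[OF W us_min] z_dist by simp
  then have "(norm (us - z))\<^sup>2 \<le> (norm (w - proj W z))\<^sup>2"
    by (simp add: power_mono)
  moreover have "(norm (us - z))\<^sup>2 = (norm (w - proj W z))\<^sup>2 + (norm (us - z - (w - proj W z)))\<^sup>2"
    using norm_proj_Pythagorean[OF W, of "us - z"] P_misfit by simp
  ultimately have "(norm (us - z - (w - proj W z)))\<^sup>2 \<le> 0"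
    by linarith
  then show "us = z + (w - proj W z)"
    by (simp add: algebra_simps)
  assume "x \<in> E"
  show "inner (w - proj W z) (proj W x) = 0"
  proof (rule inner_eq_0_if_norm_minimal)
    fix t :: real
    have "z + t *\<^sub>R x \<in> ?V"
      using proj_in[OF E] \<open>x \<in> E\<close> fin_dim_subspace_subspace[OF E] unfolding z_def
      by (metis (mono_tags, lifting) add.assoc mem_Collect_eq subspace_add subspace_scale)
    then have "infdist us ?V \<le> norm (w - proj W (z + t *\<^sub>R x))"
      by (rule pbdw_infdist_le_misfit[OF W us_min])
    also have "\<dots> = norm (w - proj W z - t *\<^sub>R proj W x)"
      by (simp add: linear_add[OF linear_proj[OF W]] linear_scale[OF linear_proj[OF W]] algebra_simps)
    finally have "norm (us - z) \<le> norm (w - proj W z - t *\<^sub>R proj W x)"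
      using z_dist by simp
    then show "norm (w - proj W z) \<le> norm (w - proj W z - t *\<^sub>R proj W x)"
      using norm_proj_le[OF W, of "us - z"] P_misfit by simp
  qed
qed

lemma norm_minus_proj_le:
  assumes W: "fin_dim_subspace W" and "1 \<le> \<mu>" and x: "norm x \<le> \<mu> * norm (proj W x)"
  shows "norm (x - proj W x) \<le> sqrt (\<mu>\<^sup>2 - 1) * norm (proj W x)"
proof (rule power2_le_imp_le)
  have "(norm x)\<^sup>2 \<le> (\<mu> * norm (proj W x))\<^sup>2"
    using x by (simp add: power_mono)
  then show "(norm (x - proj W x))\<^sup>2 \<le> (sqrt (\<mu>\<^sup>2 - 1) * norm (proj W x))\<^sup>2"
    using norm_proj_Pythagorean[OF W, of x] \<open>1 \<le> \<mu>\<close>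
    by (simp add: power_mult_distrib algebra_simps)
qed (use \<open>1 \<le> \<mu>\<close> in simp)

lemma add_mult_le_sqrt_mult_sqrt:
  fixes a b s :: real
  shows "a + s * b \<le> sqrt (1 + s\<^sup>2) * sqrt (a\<^sup>2 + b\<^sup>2)"
proof -
  have "(a + s * b)\<^sup>2 \<le> (1 + s\<^sup>2) * (a\<^sup>2 + b\<^sup>2)"
    using zero_le_power2[of "s * a - b"] by (simp add: power2_eq_square algebra_simps)
  then have "\<bar>a + s * b\<bar> \<le> sqrt ((1 + s\<^sup>2) * (a\<^sup>2 + b\<^sup>2))"
    using real_sqrt_le_mono by fastforce
  then show ?thesis
    by (simp add: real_sqrt_mult)
qed

lemma sqrt_sum_squares_le_mult_add:
  fixes G Q T s \<mu> :: real
  assumes "0 \<le> G" "0 \<le> Q" "0 \<le> s" "s \<le> \<mu>" "s\<^sup>2 = \<mu>\<^sup>2 - 1"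
    and "0 \<le> T" "T \<le> \<mu> * G + s * Q"
  shows "sqrt (Q\<^sup>2 + T\<^sup>2) \<le> \<mu> * (G + Q)"
proof (rule real_le_lsqrt)
  have "T\<^sup>2 \<le> (\<mu> * G + s * Q)\<^sup>2"
    using assms(6,7) by (simp add: power_mono)
  then have "Q\<^sup>2 + T\<^sup>2 \<le> \<mu>\<^sup>2 * G\<^sup>2 + 2 * (\<mu> * s * G * Q) + (1 + s\<^sup>2) * Q\<^sup>2"
    by (simp add: power2_eq_square algebra_simps)
  also have "\<dots> \<le> \<mu>\<^sup>2 * G\<^sup>2 + 2 * (\<mu> * \<mu> * G * Q) + \<mu>\<^sup>2 * Q\<^sup>2"
    using assms(1-5) by (simp add: mult_right_mono mult_left_mono)
  also have "\<dots> = (\<mu> * (G + Q))\<^sup>2"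
    by (simp add: power2_eq_square algebra_simps)
  finally show "Q\<^sup>2 + T\<^sup>2 \<le> (\<mu> * (G + Q))\<^sup>2" .
qed (use assms in auto)

text \<open>
  In the application \<open>g\<close> is the best-approximation error, \<open>x \<in> E\<close> and \<open>a\<close> is the data misfit. With
  \<open>s = sqrt (\<mu>\<^sup>2 - 1)\<close> the inf-sup bound gives \<open>\<parallel>x - P\<^sub>W x\<parallel> \<le> s \<parallel>P\<^sub>W x\<parallel>\<close>, and Cauchy--Schwarz
  in the plane gives \<open>\<parallel>g - P\<^sub>W g\<parallel> + s \<parallel>P\<^sub>W g\<parallel> \<le> \<mu> \<parallel>g\<parallel>\<close>.
\<close>
lemma norm_le_mu_mult_add_norm_proj:
  assumes W: "fin_dim_subspace W" and "1 \<le> \<mu>" and x: "norm x \<le> \<mu> * norm (proj W x)"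
    and "a \<in> W" and a_orth: "inner a (proj W x) = 0"
  shows "norm (g + x - a) \<le> \<mu> * (norm g + norm (proj W (g + x - a)))"
proof -
  note P_lin = linear_proj[OF W]
  define d where "d = g + x - a"
  define s where "s = sqrt (\<mu>\<^sup>2 - 1)"
  have "0 \<le> s" "s \<le> \<mu>" "s\<^sup>2 = \<mu>\<^sup>2 - 1"
    using \<open>1 \<le> \<mu>\<close> real_sqrt_le_mono[of "\<mu>\<^sup>2 - 1" "\<mu>\<^sup>2"] by (simp_all add: s_def)
  have Pd: "proj W d = proj W g + proj W x - a"
    by (simp only: d_def linear_add[OF P_lin] linear_diff[OF P_lin] proj_self[OF W \<open>a \<in> W\<close>])
  have "orthogonal (proj W x) (- a)"
    using a_orth by (simp add: orthogonal_def inner_commute)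
  then have "(norm (proj W x + - a))\<^sup>2 = (norm (proj W x))\<^sup>2 + (norm (- a))\<^sup>2"
    by (rule norm_add_Pythagorean)
  then have "(norm (proj W d - proj W g))\<^sup>2 = (norm (proj W x))\<^sup>2 + (norm a)\<^sup>2"
    by (simp add: Pd algebra_simps)
  then have "norm (proj W x) \<le> norm (proj W d - proj W g)"
    by (simp add: power2_le_imp_le)
  also have "\<dots> \<le> norm (proj W d) + norm (proj W g)"
    by (rule norm_triangle_ineq4)
  finally have Px_le: "norm (proj W x) \<le> norm (proj W d) + norm (proj W g)" .
  have "d - proj W d = (g - proj W g) + (x - proj W x)"
    unfolding Pd by (simp add: d_def algebra_simps)
  then have "norm (d - proj W d) \<le> norm (g - proj W g) + norm (x - proj W x)"
    by (simp add: norm_triangle_ineq)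
  also have "\<dots> \<le> norm (g - proj W g) + s * norm (proj W x)"
    using norm_minus_proj_le[OF W \<open>1 \<le> \<mu>\<close> x] by (simp add: s_def)
  also have "\<dots> \<le> norm (g - proj W g) + s * norm (proj W g) + s * norm (proj W d)"
    using mult_left_mono[OF Px_le \<open>0 \<le> s\<close>] by (simp add: algebra_simps)
  also have "\<dots> \<le> \<mu> * norm g + s * norm (proj W d)"
  proof -
    have "(norm (g - proj W g))\<^sup>2 + (norm (proj W g))\<^sup>2 = (norm g)\<^sup>2"
      using norm_proj_Pythagorean[OF W, of g] by simp
    then show ?thesis
      using add_mult_le_sqrt_mult_sqrt[of "norm (g - proj W g)" s "norm (proj W g)"] \<open>1 \<le> \<mu>\<close>
      by (simp add: s_def)
  qed
  finally have "norm (d - proj W d) \<le> \<mu> * norm g + s * norm (proj W d)" .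
  then have "sqrt ((norm (proj W d))\<^sup>2 + (norm (d - proj W d))\<^sup>2) \<le> \<mu> * (norm g + norm (proj W d))"
    using \<open>0 \<le> s\<close> \<open>s \<le> \<mu>\<close> \<open>s\<^sup>2 = \<mu>\<^sup>2 - 1\<close> by (intro sqrt_sum_squares_le_mult_add) simp_all
  moreover have "sqrt ((norm (proj W d))\<^sup>2 + (norm (d - proj W d))\<^sup>2) = norm d"
    using norm_proj_Pythagorean[OF W, of d] by (simp add: real_sqrt_unique)
  ultimately show ?thesis
    by (simp add: d_def)
qed

lemma pbdw_error_bound:
  assumes W: "fin_dim_subspace W" and E: "fin_dim_subspace E"
    and mu: "\<forall>x\<in>E. norm x \<le> \<mu> * norm (proj W x)" and "1 \<le> \<mu>"
    and "w \<in> W" and us: "us \<in> affW W w"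
    and us_min: "\<forall>v\<in>affW W w. infdist us {c + x |x. x \<in> E} \<le> infdist v {c + x |x. x \<in> E}"
  shows "norm (v - us) \<le> \<mu> * (infdist v {c + x |x. x \<in> E} + norm (proj W v - w))"
proof -
  define z where "z = c + proj E (us - c)"
  define a where "a = w - proj W z"
  define g where "g = v - c - proj E (v - c)"
  define x where "x = proj E (v - c) - proj E (us - c)"
  have us_eq: "us = z + a" and a_orth: "\<And>y. y \<in> E \<Longrightarrow> inner a (proj W y) = 0"
    using pbdw_estimator_decomposition[OF W E \<open>w \<in> W\<close> us us_min] by (simp_all add: z_def a_def)
  have "x \<in> E"
    using proj_in[OF E] subspace_diff[OF fin_dim_subspace_subspace[OF E]] by (simp add: x_def)
  have "a \<in> W"
    using \<open>w \<in> W\<close> proj_in[OF W] subspace_diff[OF fin_dim_subspace_subspace[OF W]] by (simp add: a_def)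
  have "v - us = v - z - a"
    using us_eq by simp
  also have "\<dots> = g + x - a"
    by (simp add: z_def g_def x_def)
  finally have diff: "v - us = g + x - a" .
  have "proj W (v - us) = proj W v - w"
    using linear_diff[OF linear_proj[OF W]] proj_affW[OF W \<open>w \<in> W\<close> us] by simp
  then have "norm (v - us) \<le> \<mu> * (norm g + norm (proj W v - w))"
    using norm_le_mu_mult_add_norm_proj[OF W \<open>1 \<le> \<mu>\<close> _ \<open>a \<in> W\<close> a_orth[OF \<open>x \<in> E\<close>], of g]
      mu \<open>x \<in> E\<close> diff by simp
  then show ?thesis
    using infdist_affine_subspace[OF E, of v c] by (simp add: g_def)
qed

section \<open>Residuals and the solution manifold\<close>

lemma infdist_solman_le_resid:
  fixes A :: "'a \<Rightarrow> 'v::real_normed_vector \<Rightarrow>\<^sub>L 'z::real_normed_vector"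
  assumes "y \<in> Y"
    and "\<exists>B. (\<forall>v. blinfun_apply B (A y v) = v) \<and> (\<forall>z. A y (blinfun_apply B z) = z)
      \<and> norm B \<le> inverse r"
  shows "infdist v (solman Y A f) \<le> resid A f v y / r"
proof -
  obtain B where left: "\<forall>v. blinfun_apply B (A y v) = v"
    and right: "\<forall>z. A y (blinfun_apply B z) = z" and "norm B \<le> inverse r"
    using assms(2) by blast
  have "B (f y) \<in> solman Y A f"
    unfolding solman_def using \<open>y \<in> Y\<close> right by blast
  then have "infdist v (solman Y A f) \<le> norm (v - B (f y))"
    using infdist_le by (metis dist_norm)
  also have "v - B (f y) = B (A y v - f y)"
    using left by (simp add: blinfun.diff_right)
  also have "norm (B (A y v - f y)) \<le> norm B * norm (A y v - f y)"
    by (rule norm_blinfun)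
  also have "\<dots> \<le> inverse r * norm (A y v - f y)"
    using \<open>norm B \<le> inverse r\<close> by (rule mult_right_mono) simp
  finally show ?thesis
    by (simp add: resid_def divide_inverse mult.commute)
qed

lemma resid_le_norm_diff:
  fixes A :: "'a \<Rightarrow> 'v::real_normed_vector \<Rightarrow>\<^sub>L 'z::real_normed_vector"
  assumes "A y u = f y"
  shows "resid A f v y \<le> norm (A y) * norm (v - u)"
proof -
  have "A y v - f y = A y (v - u)"
    using assms by (simp add: blinfun.diff_right)
  then show ?thesis
    unfolding resid_def by (simp add: norm_blinfun)
qed

lemma bounded_solman:
  fixes A :: "'a::topological_space \<Rightarrow> 'v::real_normed_vector \<Rightarrow>\<^sub>L 'z::real_normed_vector"
  assumes "compact Y" and "continuous_on Y f"
    and inv: "\<forall>y\<in>Y. \<exists>B. (\<forall>v. blinfun_apply B (A y v) = v) \<and> norm B \<le> inverse r"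
  shows "bounded (solman Y A f)"
proof -
  obtain C where C: "\<forall>y\<in>Y. norm (f y) \<le> C"
    using compact_imp_bounded[OF compact_continuous_image[OF assms(2,1)]]
    unfolding bounded_iff by blast
  have "norm u \<le> inverse r * C" if u: "u \<in> solman Y A f" for u
  proof -
    obtain y where y: "y \<in> Y" "A y u = f y"
      using u unfolding solman_def by blast
    then obtain B where B: "\<forall>v. blinfun_apply B (A y v) = v" "norm B \<le> inverse r"
      using inv by blast
    have "norm u = norm (B (f y))"
      using B(1) y(2) by metis
    also have "\<dots> \<le> norm B * norm (f y)"
      by (rule norm_blinfun)
    also have "\<dots> \<le> inverse r * C"
      using B(2) C y(1) order_trans[OF norm_ge_zero B(2)] by (intro mult_mono) auto
    finally show ?thesis .
  qed
  then show ?thesis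
    unfolding bounded_iff by blast
qed

lemma le_add_mult_infdistI:
  fixes x :: "'a::metric_space"
  assumes "S \<noteq> {}" and "0 < b" and "\<forall>s\<in>S. c \<le> d + b * dist x s"
  shows "c \<le> d + b * infdist x S"
proof -
  have "(c - d) / b \<le> infdist x S"
    unfolding infdist_eq_setdist
    using assms by (intro le_setdistI) (auto simp: pos_divide_le_eq mult.commute)
  then show ?thesis
    using \<open>0 < b\<close> by (simp add: pos_divide_le_eq mult.commute)
qed

lemma bounded_Msig:
  assumes "bounded M" and "M \<noteq> {}"
  shows "bounded (Msig M \<sigma>)"
proof -
  obtain C where C: "\<forall>m\<in>M. norm m \<le> C"
    using assms(1) unfolding bounded_iff by blast
  have "norm v \<le> \<sigma> + C" if "v \<in> Msig M \<sigma>" for v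
  proof -
    have "norm v - C \<le> 0 + 1 * dist v m" if "m \<in> M" for m
      using C[rule_format, OF that] norm_triangle_sub[of v m] by (simp add: dist_norm)
    then have "norm v - C \<le> infdist v M"
      using le_add_mult_infdistI[OF assms(2), of 1 "norm v - C" 0 v] by simp
    then show ?thesis
      using that unfolding Msig_def by simp
  qed
  then show ?thesis
    unfolding bounded_iff by blast
qed

lemma norm_diff_le_delta:
  assumes "bounded (Msig M \<sigma>)" and "u \<in> Msig M \<sigma>" "v \<in> Msig M \<sigma>"
    and "u - v \<in> orthogonal_comp W"
  shows "norm (u - v) \<le> delta M W \<sigma>"
  unfolding delta_def
proof (rule cSup_upper)
  show "norm (u - v) \<in> {norm (u - v) |u v. u \<in> Msig M \<sigma> \<and> v \<in> Msig M \<sigma> \<and> u - v \<in> orthogonal_comp W}"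
    using assms(2-4) by blast
  obtain C where C: "\<forall>x\<in>Msig M \<sigma>. norm x \<le> C"
    using assms(1) unfolding bounded_iff by blast
  have "norm (a - b) \<le> 2 * C" if "a \<in> Msig M \<sigma>" "b \<in> Msig M \<sigma>" for a b
  proof -
    have "norm a \<le> C" "norm b \<le> C"
      using C that by blast+
    then show ?thesis
      using norm_triangle_ineq4[of a b] by simp
  qed
  then show "bdd_above {norm (u - v) |u v. u \<in> Msig M \<sigma> \<and> v \<in> Msig M \<sigma> \<and> u - v \<in> orthogonal_comp W}"
    by (intro bdd_aboveI) blast
qed

section \<open>Alternating minimisation and surrogate model selection\<close>

lemma alternating_minimization_mem:
  assumes "u 0 \<in> S" "y 0 \<in> Y"
    and "\<forall>k. y (Suc k) \<in> Y \<and> (\<forall>y'\<in>Y. F (u k) (y (Suc k)) \<le> F (u k) y')"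
    and "\<forall>k. u (Suc k) \<in> S \<and> (\<forall>v\<in>S. F (u (Suc k)) (y (Suc k)) \<le> F v (y (Suc k)))"
  shows "u k \<in> S \<and> y k \<in> Y"
  using assms by (cases k) auto

lemma alternating_minimization_decseq:
  fixes F :: "'v \<Rightarrow> 'a \<Rightarrow> 'b::linorder"
  assumes "u 0 \<in> S" "y 0 \<in> Y"
    and y_min: "\<forall>k. y (Suc k) \<in> Y \<and> (\<forall>y'\<in>Y. F (u k) (y (Suc k)) \<le> F (u k) y')"
    and u_min: "\<forall>k. u (Suc k) \<in> S \<and> (\<forall>v\<in>S. F (u (Suc k)) (y (Suc k)) \<le> F v (y (Suc k)))"
  shows "decseq (\<lambda>k. F (u k) (y k))"
proof (rule decseq_SucI)
  fix k
  have "u k \<in> S" "y k \<in> Y"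
    using alternating_minimization_mem[OF assms] by auto
  then have "F (u (Suc k)) (y (Suc k)) \<le> F (u k) (y (Suc k))" "F (u k) (y (Suc k)) \<le> F (u k) (y k)"
    using y_min u_min by blast+
  then show "F (u (Suc k)) (y (Suc k)) \<le> F (u k) (y k)"
    by (rule order_trans)
qed

lemma surrogate_le_resid:
  fixes A :: "'a \<Rightarrow> 'v::real_normed_vector \<Rightarrow>\<^sub>L 'z::real_normed_vector"
  shows "y \<in> Y \<Longrightarrow> surrogate Y A f v \<le> resid A f v y"
  unfolding surrogate_def by (rule cINF_lower) (auto intro: bdd_belowI[of _ 0] simp: resid_def)

lemma resid_le_surrogate:
  fixes A :: "'a \<Rightarrow> 'v::real_normed_vector \<Rightarrow>\<^sub>L 'z::real_normed_vector"
  shows "Y \<noteq> {} \<Longrightarrow> \<forall>y\<in>Y. resid A f v y0 \<le> resid A f v y \<Longrightarrow> resid A f v y0 \<le> surrogate Y A f v"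
  unfolding surrogate_def by (rule cINF_greatest) auto

lemma norm_proj_minus_data_le:
  assumes "fin_dim_subspace W"
  shows "norm (proj W v - (proj W u + \<eta>)) \<le> dist u v + norm \<eta>"
proof -
  have data: "proj W v - (proj W u + \<eta>) = proj W (v - u) - \<eta>"
    by (simp only: linear_diff[OF linear_proj[OF assms]] diff_diff_eq)
  have "norm (proj W v - (proj W u + \<eta>)) \<le> norm (proj W (v - u)) + norm \<eta>"
    unfolding data by (rule norm_triangle_ineq4)
  also have "\<dots> \<le> dist u v + norm \<eta>"
    using norm_proj_le[OF assms, of "v - u"] by (simp add: dist_norm norm_minus_commute)
  finally show ?thesis .
qed

lemma norm_diff_le_delta_add_noise:
  assumes W: "fin_dim_subspace W" and "bounded (Msig M \<sigma>)"
    and "u + \<eta> \<in> Msig M \<sigma>" "v \<in> Msig M \<sigma>" and "v \<in> affW W (proj W u + \<eta>)"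
  shows "norm (u - v) \<le> delta M W \<sigma> + norm \<eta>"
proof -
  obtain x where "x \<in> orthogonal_comp W" "v = proj W u + \<eta> + x"
    using \<open>v \<in> affW W _\<close> unfolding affW_def by blast
  then have "u + \<eta> - v = (u - proj W u) - x"
    by simp
  then have "u + \<eta> - v \<in> orthogonal_comp W"
    using minus_proj_in_orthogonal_comp[OF W] \<open>x \<in> orthogonal_comp W\<close>
      subspace_diff[OF subspace_orthogonal_comp] by metis
  then have "norm (u + \<eta> - v) \<le> delta M W \<sigma>"
    by (rule norm_diff_le_delta[OF assms(2-4)])
  then show ?thesis
    using norm_triangle_ineq4[of "u + \<eta> - v" \<eta>] by simp
qed

lemma surrogate_selection_le:
  fixes A :: "'a \<Rightarrow> 'v::real_inner \<Rightarrow>\<^sub>L 'z::real_normed_vector"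
  assumes A_bound: "\<forall>y\<in>Y. norm (A y) \<le> R" and "0 < R"
    and W: "fin_dim_subspace W" and "w \<in> W" and w: "w = proj W u + \<eta>"
    and family: "solman Y A f = (\<Union>k\<in>{1..K}. Mk k)" and "solman Y A f \<noteq> {}"
    and Vbar: "\<forall>k\<in>{1..K}. fin_dim_subspace (Vbar k)"
    and eps: "\<forall>k\<in>{1..K}. \<forall>v\<in>Mk k. infdist v {ubar k + x |x. x \<in> Vbar k} \<le> \<epsilon>"
    and mu: "\<forall>k\<in>{1..K}. mu_const (Vbar k) W \<le> ereal \<mu>" and "1 \<le> \<mu>"
    and ustark: "\<forall>k\<in>{1..K}. ustark k \<in> affW W w \<and>
        (\<forall>v\<in>affW W w. infdist (ustark k) {ubar k + x |x. x \<in> Vbar k}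
                          \<le> infdist v {ubar k + x |x. x \<in> Vbar k})"
    and kstar: "kstar \<in> {1..K} \<and>
        (\<forall>k\<in>{1..K}. surrogate Y A f (ustark kstar) \<le> surrogate Y A f (ustark k))"
  shows "surrogate Y A f (ustark kstar)
    \<le> R * \<mu> * (\<epsilon> + norm \<eta>) + R * \<mu> * infdist u (solman Y A f)"
proof (rule le_add_mult_infdistI[OF \<open>solman Y A f \<noteq> {}\<close>])
  show "0 < R * \<mu>"
    using \<open>0 < R\<close> \<open>1 \<le> \<mu>\<close> by simp
  show "\<forall>ub\<in>solman Y A f. surrogate Y A f (ustark kstar) \<le> R * \<mu> * (\<epsilon> + norm \<eta>) + R * \<mu> * dist u ub"
  proof
    fix ub assume "ub \<in> solman Y A f"
    then obtain yb where yb: "yb \<in> Y" "A yb ub = f yb"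
      unfolding solman_def by blast
    obtain k where k: "k \<in> {1..K}" "ub \<in> Mk k"
      using \<open>ub \<in> solman Y A f\<close> family by blast
    have "\<forall>x\<in>Vbar k. norm x \<le> \<mu> * norm (proj W x)"
      using norm_le_mu_const_mult_proj mu k(1) \<open>1 \<le> \<mu>\<close> by fastforce
    then have "norm (ub - ustark k)
        \<le> \<mu> * (infdist ub {ubar k + x |x. x \<in> Vbar k} + norm (proj W ub - w))"
      using Vbar ustark k(1) by (intro pbdw_error_bound[OF W _ _ \<open>1 \<le> \<mu>\<close> \<open>w \<in> W\<close>]) auto
    also have "\<dots> \<le> \<mu> * (\<epsilon> + (dist u ub + norm \<eta>))"
      using eps k \<open>1 \<le> \<mu>\<close> norm_proj_minus_data_le[OF W, of ub u \<eta>] w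
      by (intro mult_left_mono add_mono) auto
    finally have err: "norm (ub - ustark k) \<le> \<mu> * (\<epsilon> + (dist u ub + norm \<eta>))" .
    have "surrogate Y A f (ustark kstar) \<le> surrogate Y A f (ustark k)"
      using kstar k(1) by blast
    also have "\<dots> \<le> resid A f (ustark k) yb"
      using yb(1) by (rule surrogate_le_resid)
    also have "\<dots> \<le> norm (A yb) * norm (ustark k - ub)"
      using yb(2) by (rule resid_le_norm_diff)
    also have "\<dots> \<le> R * (\<mu> * (\<epsilon> + (dist u ub + norm \<eta>)))"
      using A_bound yb(1) err \<open>0 < R\<close> by (intro mult_mono) (auto simp: norm_minus_commute)
    finally show "surrogate Y A f (ustark kstar) \<le> R * \<mu> * (\<epsilon> + norm \<eta>) + R * \<mu> * dist u ub"
      by (simp add: algebra_simps)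
  qed
qed

theorem mainTheorem9:
  fixes Y :: "'a::euclidean_space set"
    and A :: "'a \<Rightarrow> ('v::{real_inner,complete_space} \<Rightarrow>\<^sub>L 'z::{real_inner,complete_space})"
    and f :: "'a \<Rightarrow> 'z"
    and r R :: real
    and W :: "'v set" and m :: nat
    and K :: nat
    and Mk :: "nat \<Rightarrow> 'v set" and ubar :: "nat \<Rightarrow> 'v" and Vbar :: "nat \<Rightarrow> 'v set"
    and epsk :: "nat \<Rightarrow> real"
    and \<epsilon> \<mu> :: real
    and u \<eta> w :: 'v
    and eps_model eps_noise :: real
    and ustark :: "nat \<Rightarrow> 'v" and kstar :: nat
    and useq :: "nat \<Rightarrow> 'v" and yseq :: "nat \<Rightarrow> 'a"
  assumes Y_compact: "compact Y" and Y_ne: "Y \<noteq> {}"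
    and A_cont: "continuous_on Y A" and f_cont: "continuous_on Y f"
    and rR: "0 < r" "r \<le> R"
    and A_bound: "\<forall>y\<in>Y. norm (A y) \<le> R"
    and A_iso: "\<forall>y\<in>Y. \<exists>B :: ('z \<Rightarrow>\<^sub>L 'v). (\<forall>v. blinfun_apply B (A y v) = v) \<and> (\<forall>z. A y (blinfun_apply B z) = z) \<and> norm B \<le> inverse r"
    and W_sub: "fin_dim_subspace W" and W_dim: "dim W = m"
    and family_union: "solman Y A f = (\<Union>k\<in>{1..K}. Mk k)"
    and Vbar_sub: "\<forall>k\<in>{1..K}. fin_dim_subspace (Vbar k) \<and> dim (Vbar k) \<le> m"
    and epsk_bound: "\<forall>k\<in>{1..K}. \<forall>v\<in>Mk k. infdist v {ubar k + x | x. x \<in> Vbar k} \<le> epsk k"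
    and eps_pos: "\<epsilon> > 0" and mu_ge: "\<mu> \<ge> 1"
    and admissible: "\<forall>k\<in>{1..K}. epsk k \<le> \<epsilon> \<and> mu_const (Vbar k) W \<le> ereal \<mu>"
    and u_model: "infdist u (solman Y A f) \<le> eps_model"
    and eta_W: "\<eta> \<in> W" and eta_noise: "norm \<eta> \<le> eps_noise"
    and w_def: "w = proj W u + \<eta>"
    and ustark_def: "\<forall>k\<in>{1..K}. ustark k \<in> affW W w \<and>
        (\<forall>v\<in>affW W w. infdist (ustark k) {ubar k + x | x. x \<in> Vbar k}
                          \<le> infdist v {ubar k + x | x. x \<in> Vbar k})"
    and kstar_def: "kstar \<in> {1..K} \<and>
        (\<forall>k\<in>{1..K}. surrogate Y A f (ustark kstar) \<le> surrogate Y A f (ustark k))"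
    and u0: "useq 0 = ustark kstar"
    and y0: "yseq 0 \<in> Y \<and> (\<forall>y\<in>Y. resid A f (ustark kstar) (yseq 0) \<le> resid A f (ustark kstar) y)"
    and ystep: "\<forall>k. yseq (Suc k) \<in> Y \<and> (\<forall>y\<in>Y. resid A f (useq k) (yseq (Suc k)) \<le> resid A f (useq k) y)"
    and ustep: "\<forall>k. useq (Suc k) \<in> affW W w \<and>
        (\<forall>v\<in>affW W w. resid A f (useq (Suc k)) (yseq (Suc k)) \<le> resid A f v (yseq (Suc k)))"
  shows "(\<forall>k. resid A f (useq (Suc k)) (yseq (Suc k)) \<le> resid A f (useq k) (yseq k)) \<and>
         (\<forall>k. norm (u - useq k) \<le>
            delta (solman Y A f) W ((R / r) * (\<mu> * (\<epsilon> + eps_noise) + (\<mu> + 1) * eps_model)) + eps_noise)"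
proof -
  let ?M = "solman Y A f"
  define \<rho> where "\<rho> = \<mu> * (\<epsilon> + eps_noise) + (\<mu> + 1) * eps_model"
  have "w \<in> W"
    using w_def eta_W proj_in[OF W_sub] subspace_add[OF fin_dim_subspace_subspace[OF W_sub]] by simp
  have iterates: "useq k \<in> affW W w \<and> yseq k \<in> Y" for k
    using alternating_minimization_mem[OF _ _ ystep ustep] u0 ustark_def kstar_def y0 by auto
  have dec: "decseq (\<lambda>k. resid A f (useq k) (yseq k))"
    using alternating_minimization_decseq[OF _ _ ystep ustep] u0 ustark_def kstar_def y0 by auto
  have "?M \<noteq> {}"
    using Y_ne A_iso unfolding solman_def by fast
  have "0 \<le> eps_model" "0 \<le> eps_noise"
    using u_model eta_noise order_trans[OF infdist_nonneg] order_trans[OF norm_ge_zero] by auto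
  have "resid A f (useq 0) (yseq 0) \<le> surrogate Y A f (ustark kstar)"
    unfolding u0 using y0 by (intro resid_le_surrogate[OF Y_ne]) blast
  also have "\<dots> \<le> R * \<mu> * (\<epsilon> + norm \<eta>) + R * \<mu> * infdist u ?M"
  proof (rule surrogate_selection_le[OF A_bound _ W_sub \<open>w \<in> W\<close> w_def family_union \<open>?M \<noteq> {}\<close>
        _ _ _ mu_ge ustark_def kstar_def])
    show "\<forall>k\<in>{1..K}. \<forall>v\<in>Mk k. infdist v {ubar k + x |x. x \<in> Vbar k} \<le> \<epsilon>"
      using epsk_bound admissible by (meson order_trans)
  qed (use rR Vbar_sub admissible in auto)
  also have "\<dots> \<le> R * \<mu> * (\<epsilon> + eps_noise) + R * \<mu> * eps_model"
    using rR mu_ge eta_noise u_model by (intro add_mono mult_left_mono) auto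
  also have "\<dots> \<le> R * \<rho>"
    using rR \<open>0 \<le> eps_model\<close> by (simp add: \<rho>_def algebra_simps)
  finally have resid_le: "resid A f (useq k) (yseq k) \<le> R * \<rho>" for k
    using decseqD[OF dec, of 0 k] by simp
  have iterates_close: "useq k \<in> Msig ?M (R / r * \<rho>)" for k
    unfolding Msig_def mem_Collect_eq
    by (rule order_trans[OF infdist_solman_le_resid[of "yseq k"]])
      (use A_iso iterates divide_right_mono[OF resid_le[of k]] rR in auto)
  have "0 \<le> \<mu> * \<epsilon>" "eps_noise \<le> \<mu> * eps_noise" "0 \<le> \<mu> * eps_model"
    using eps_pos mu_ge \<open>0 \<le> eps_model\<close> mult_right_mono[OF mu_ge \<open>0 \<le> eps_noise\<close>] by simp_all
  then have rho_ge: "eps_model + eps_noise \<le> \<rho>"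
    by (simp add: \<rho>_def algebra_simps)
  then have "\<rho> \<le> R / r * \<rho>"
    using mult_right_mono[of 1 "R / r" \<rho>] rR \<open>0 \<le> eps_model\<close> \<open>0 \<le> eps_noise\<close> by simp
  then have "u + \<eta> \<in> Msig ?M (R / r * \<rho>)"
    using rho_ge infdist_triangle[of "u + \<eta>" ?M u] u_model eta_noise
    unfolding Msig_def by (simp add: dist_norm)
  moreover have "bounded (Msig ?M (R / r * \<rho>))"
    using bounded_Msig[OF bounded_solman[OF Y_compact f_cont] \<open>?M \<noteq> {}\<close>] A_iso by blast
  ultimately have "norm (u - useq k) \<le> delta ?M W (R / r * \<rho>) + norm \<eta>" for k
    using norm_diff_le_delta_add_noise[OF W_sub _ _ iterates_close] iterates w_def by simp
  then have "norm (u - useq k) \<le> delta ?M W (R / r * \<rho>) + eps_noise" for k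
    by (rule order_trans) (use eta_noise in simp)
  with dec show ?thesis
    unfolding decseq_Suc_iff \<rho>_def by blast
qed

end
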